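(* Let $a,b,c,d$ be positive integers with $d<b\le c$ and $b\equiv c\pmod 2$, and let $s=\tfrac12 b+\tfrac12 c$. Then $$K_3:=\frac{s^{2s^2}}{b^{b^2}c^{c^2}}\cdot\frac{(a+s-d)^{2(a+s-d)^2}}{(a+b-d)^{(a+b-d)^2}(a+c-d)^{(a+c-d)^2}}\cdot\frac{(b-d)^{(b-d)^2}(c-d)^{(c-d)^2}}{(s-d)^{2(s-d)^2}}\cdot\frac{(a+b)^{(a+b)^2}(a+c)^{(a+c)^2}}{(a+s)^{2(a+s)^2}}\le 1,$$ with strict inequality unless $b=c$. Moreover, for positive integers $a,d,c$ with $d<c$, $$\frac{a^{a}d^{d}c^{c}(a+c-d)^{a+c-d}}{(a+d)^{a+d}(a+c)^{a+c}(c-d)^{c-d}}<1.$$ *)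

theory Defs
  imports Complex_Main
begin

text \<open>All bases are positive
  integers and all exponents are natural numbers, so we use natural-number powers of reals.\<close>

definition K3 :: "nat \<Rightarrow> nat \<Rightarrow> nat \<Rightarrow> nat \<Rightarrow> real" where
  "K3 a b c d = (let s = (b + c) div 2 in
      (real s ^ (2 * s^2) / (real b ^ (b^2) * real c ^ (c^2)))
    * (real (a+s-d) ^ (2 * (a+s-d)^2)
        / (real (a+b-d) ^ ((a+b-d)^2) * real (a+c-d) ^ ((a+c-d)^2)))
    * ((real (b-d) ^ ((b-d)^2) * real (c-d) ^ ((c-d)^2)) / real (s-d) ^ (2 * (s-d)^2))
    * ((real (a+b) ^ ((a+b)^2) * real (a+c) ^ ((a+c)^2)) / real (a+s) ^ (2 * (a+s)^2)))"

end

theory Submission imports Defs begin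

text \<open>Write \<open>f x = x\<^sup>2 ln x\<close> and \<open>\<Delta>(t) = f(t+b) + f(t+c) - 2 f(t+s)\<close>. Taking logarithms,
  \<open>ln K\<^sub>3 = (\<Delta>(a) - \<Delta>(a-d)) - (\<Delta>(0) - \<Delta>(-d))\<close>. Since \<open>f'' = 2 ln x + 3\<close>, we get
  \<open>\<Delta>'' (t) = 2 ln ((t+b)(t+c) / (t+s)\<^sup>2) < 0\<close> for \<open>b \<noteq> c\<close> by AM-GM, so \<open>\<Delta>'\<close> is strictly
  decreasing and hence so is \<open>t \<mapsto> \<Delta>(t) - \<Delta>(t-d)\<close>; this gives \<open>ln K\<^sub>3 < 0\<close>.
  The second inequality is the same monotonicity argument applied to \<open>-x ln x\<close>, together with
  the elementary bound \<open>a\<^sup>a d\<^sup>d < (a+d)\<^sup>a\<^sup>+\<^sup>d\<close>.\<close>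

lemma increment_strict_antimono:
  fixes g g' :: "real \<Rightarrow> real"
  assumes deriv: "\<And>x. l < x \<Longrightarrow> (g has_real_derivative g' x) (at x)"
    and antimono: "\<And>x y. l < x \<Longrightarrow> x < y \<Longrightarrow> g' y < g' x"
    and "0 < d" "l < u - d" "u < v"
  shows "g v - g (v - d) < g u - g (u - d)"
proof -
  have "(\<lambda>t. g t - g (t - d)) v < (\<lambda>t. g t - g (t - d)) u"
    using \<open>u < v\<close>
  proof (rule DERIV_neg_imp_decreasing)
    fix x assume "u \<le> x" "x \<le> v"
    then have "l < x - d" "l < x" using assms by linarith+
    have "((\<lambda>t. g (t - d)) has_real_derivative g' (x - d)) (at x)"
      using deriv[OF \<open>l < x - d\<close>] DERIV_shift[of g "g' (x - d)" x "- d"] by simp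
    then have "((\<lambda>t. g t - g (t - d)) has_real_derivative g' x - g' (x - d)) (at x)"
      by (intro DERIV_diff deriv[OF \<open>l < x\<close>])
    moreover have "g' x < g' (x - d)"
      using antimono[OF \<open>l < x - d\<close>] \<open>0 < d\<close> by simp
    ultimately show "\<exists>y. ((\<lambda>t. g t - g (t - d)) has_real_derivative y) (at x) \<and> y < 0"
      by (intro exI[of _ "g' x - g' (x - d)"]) simp
  qed
  then show ?thesis by simp
qed

definition midpoint_defect :: "(real \<Rightarrow> real) \<Rightarrow> real \<Rightarrow> real \<Rightarrow> real \<Rightarrow> real" where
  "midpoint_defect f B C t = f (t + B) + f (t + C) - 2 * f (t + (B + C) / 2)"

lemma midpoint_defect_has_real_derivative:
  assumes deriv: "\<And>x. 0 < x \<Longrightarrow> (f has_real_derivative f' x) (at x)"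
    and "0 < t + B" "0 < t + C"
  shows "(midpoint_defect f B C has_real_derivative midpoint_defect f' B C t) (at t)"
proof -
  have "0 < t + (B + C) / 2" using assms(2,3) by (simp add: field_simps)
  have shifted: "((\<lambda>t. f (t + k)) has_real_derivative f' (t + k)) (at t)" if "0 < t + k" for k
    using deriv[OF that] DERIV_shift[of f "f' (t + k)" t k] by simp
  show ?thesis
    unfolding midpoint_defect_def[abs_def]
    using shifted[OF assms(2)] shifted[OF assms(3)] shifted[OF \<open>0 < t + (B + C) / 2\<close>]
    by (intro DERIV_diff DERIV_add DERIV_cmult) simp_all
qed

lemma midpoint_defect_ln_neg:
  assumes "0 < t + B" "0 < t + C" "B \<noteq> C"
  shows "midpoint_defect ln B C t < 0"
proof -
  have "0 < t + (B + C) / 2" using assms by (simp add: field_simps)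
  have "(t + (B + C) / 2)\<^sup>2 - (t + B) * (t + C) = ((B - C) / 2)\<^sup>2"
    by (simp add: power2_eq_square field_simps)
  moreover have "0 < ((B - C) / 2)\<^sup>2" using \<open>B \<noteq> C\<close> by simp
  ultimately have "(t + B) * (t + C) < (t + (B + C) / 2)\<^sup>2" by linarith
  then have "ln ((t + B) * (t + C)) < ln ((t + (B + C) / 2)\<^sup>2)"
    using assms \<open>0 < t + (B + C) / 2\<close> by simp
  then show ?thesis
    using assms \<open>0 < t + (B + C) / 2\<close>
    by (simp add: midpoint_defect_def ln_mult ln_realpow)
qed

lemma midpoint_defect_xsq_ln_deriv_strict_antimono:
  assumes "B < C" "- B < x" "x < y"
  shows "midpoint_defect (\<lambda>x. 2 * x * ln x + x) B C y < midpoint_defect (\<lambda>x. 2 * x * ln x + x) B C x"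
  using \<open>x < y\<close>
proof (rule DERIV_neg_imp_decreasing)
  fix t assume "x \<le> t" "t \<le> y"
  then have "0 < t + B" "0 < t + C" using assms by linarith+
  have "((\<lambda>x. 2 * x * ln x + x) has_real_derivative 2 * ln x + 3) (at x)" if "0 < x" for x
    using that by (auto intro!: derivative_eq_intros simp: field_simps)
  then have "(midpoint_defect (\<lambda>x. 2 * x * ln x + x) B C has_real_derivative
      midpoint_defect (\<lambda>x. 2 * ln x + 3) B C t) (at t)"
    using \<open>0 < t + B\<close> \<open>0 < t + C\<close> by (rule midpoint_defect_has_real_derivative)
  moreover have "midpoint_defect (\<lambda>x. 2 * ln x + 3) B C t = 2 * midpoint_defect ln B C t"
    by (simp add: midpoint_defect_def algebra_simps)
  moreover have "midpoint_defect ln B C t < 0"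
    using \<open>0 < t + B\<close> \<open>0 < t + C\<close> \<open>B < C\<close> by (intro midpoint_defect_ln_neg) simp_all
  ultimately show "\<exists>D. (midpoint_defect (\<lambda>x. 2 * x * ln x + x) B C has_real_derivative D) (at t) \<and> D < 0"
    by auto
qed

lemma midpoint_defect_xsq_ln_increment_less:
  assumes "B < C" "0 < d" "d < B" "0 < a"
  shows "midpoint_defect (\<lambda>x. x\<^sup>2 * ln x) B C a - midpoint_defect (\<lambda>x. x\<^sup>2 * ln x) B C (a - d)
    < midpoint_defect (\<lambda>x. x\<^sup>2 * ln x) B C 0 - midpoint_defect (\<lambda>x. x\<^sup>2 * ln x) B C (0 - d)"
proof (rule increment_strict_antimono[where l = "- B"])
  fix x assume "- B < x"
  then have "0 < x + B" "0 < x + C" using assms by linarith+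
  have "((\<lambda>x. x\<^sup>2 * ln x) has_real_derivative 2 * x * ln x + x) (at x)" if "0 < x" for x
    using that by (auto intro!: derivative_eq_intros simp: field_simps power2_eq_square)
  then show "(midpoint_defect (\<lambda>x. x\<^sup>2 * ln x) B C has_real_derivative
      midpoint_defect (\<lambda>x. 2 * x * ln x + x) B C x) (at x)"
    using \<open>0 < x + B\<close> \<open>0 < x + C\<close> by (rule midpoint_defect_has_real_derivative)
qed (use assms midpoint_defect_xsq_ln_deriv_strict_antimono in auto)

lemma ln_K3_eq_midpoint_defect_increments:
  assumes "d < b" "b \<le> c" "even (b + c)"
  defines "\<Delta> \<equiv> midpoint_defect (\<lambda>x. x\<^sup>2 * ln x) (real b) (real c)"
  shows "ln (K3 a b c d) = (\<Delta> (real a) - \<Delta> (real a - real d)) - (\<Delta> 0 - \<Delta> (0 - real d))"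
proof -
  define s where "s = (b + c) div 2"
  have "b + c = 2 * s" using \<open>even (b + c)\<close> unfolding s_def by simp
  then have s_midpoint: "real s = (real b + real c) / 2"
    by (simp add: field_simps flip: of_nat_add of_nat_mult)
  have "d < s" using \<open>b + c = 2 * s\<close> assms(1,2) by linarith
  have ln_power_sq: "ln (real n ^ (k * n\<^sup>2)) = real k * (real n ^ 2 * ln (real n))" for n k
    by (simp add: ln_realpow)
  have "ln (K3 a b c d)
      = 2 * (real s ^ 2 * ln (real s)) - real b ^ 2 * ln (real b) - real c ^ 2 * ln (real c)
      + 2 * (real (a+s-d) ^ 2 * ln (real (a+s-d)))
        - real (a+b-d) ^ 2 * ln (real (a+b-d)) - real (a+c-d) ^ 2 * ln (real (a+c-d))
      + real (b-d) ^ 2 * ln (real (b-d)) + real (c-d) ^ 2 * ln (real (c-d))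
        - 2 * (real (s-d) ^ 2 * ln (real (s-d)))
      + real (a+b) ^ 2 * ln (real (a+b)) + real (a+c) ^ 2 * ln (real (a+c))
        - 2 * (real (a+s) ^ 2 * ln (real (a+s)))"
    unfolding K3_def Let_def s_def[symmetric] using assms \<open>d < s\<close>
    by (simp add: ln_mult ln_div ln_power_sq[where k = 1, simplified]
        ln_power_sq[where k = 2, simplified] del: of_nat_add of_nat_diff)
  also have "\<dots> = (\<Delta> (real a) - \<Delta> (real a - real d)) - (\<Delta> 0 - \<Delta> (0 - real d))"
    using assms \<open>d < s\<close> unfolding \<Delta>_def midpoint_defect_def
    by (simp add: of_nat_diff s_midpoint algebra_simps)
  finally show ?thesis .
qed

lemma K3_le_1:
  assumes "0 < a" "0 < d" "d < b" "b \<le> c" "even (b + c)"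
  shows "K3 a b c d \<le> 1 \<and> (b \<noteq> c \<longrightarrow> K3 a b c d < 1)"
proof (cases "b = c")
  case True
  then have "K3 a b c d = 1" using assms by (simp add: K3_def mult_2 power_add)
  then show ?thesis using True by simp
next
  case False
  with assms have "b < c" "(b + c) div 2 > d" by auto
  then have "0 < K3 a b c d" using assms unfolding K3_def Let_def by simp
  moreover have "ln (K3 a b c d) < 0"
    using ln_K3_eq_midpoint_defect_increments[OF assms(3-5)]
      midpoint_defect_xsq_ln_increment_less[of "real b" "real c" "real d" "real a"] assms \<open>b < c\<close>
    by simp
  ultimately show ?thesis by (simp add: ln_less_zero_iff)
qed

lemma power_self_mult_less_power_self_add:
  fixes x y :: nat
  assumes "0 < x" "0 < y"
  shows "real x ^ x * real y ^ y < real (x + y) ^ (x + y)"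
proof -
  have "real x ^ x * real y ^ y < real (x + y) ^ x * real (x + y) ^ y"
    using assms by (intro mult_less_le_imp_less power_strict_mono power_mono) auto
  then show ?thesis by (simp add: power_add)
qed

lemma power_self_increment_less:
  fixes x y z :: nat
  assumes "0 < x" "0 < y" "y < z"
  shows "real z ^ z * real (x + y) ^ (x + y) < real (x + z) ^ (x + z) * real y ^ y"
proof -
  define g :: "real \<Rightarrow> real" where "g t = - (t * ln t)" for t
  have "g (real z + x) - g (real z + x - x) < g (real y + x) - g (real y + x - x)"
  proof (rule increment_strict_antimono[where l = 0 and g' = "\<lambda>t. - (ln t + 1)"])
    show "(g has_real_derivative - (ln t + 1)) (at t)" if "0 < t" for t
      unfolding g_def[abs_def] using that by (auto intro!: derivative_eq_intros)
  qed (use assms in auto)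
  then have "ln (real z ^ z * real (x + y) ^ (x + y)) < ln (real (x + z) ^ (x + z) * real y ^ y)"
    using assms by (simp add: g_def ln_mult ln_realpow algebra_simps)
  then show ?thesis using assms by simp
qed

lemma self_power_ratio_less_1:
  fixes a d c :: nat
  assumes "0 < a" "0 < d" "d < c"
  shows "(real a ^ a * real d ^ d * real c ^ c * real (a+c-d) ^ (a+c-d))
      / (real (a+d) ^ (a+d) * real (a+c) ^ (a+c) * real (c-d) ^ (c-d)) < 1"
proof -
  have "real a ^ a * real d ^ d < real (a + d) ^ (a + d)"
    using assms by (intro power_self_mult_less_power_self_add)
  moreover have "real c ^ c * real (a+c-d) ^ (a+c-d) < real (a+c) ^ (a+c) * real (c-d) ^ (c-d)"
    using assms power_self_increment_less[of a "c - d" c] by simp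
  moreover have "0 < real (a + d) ^ (a + d)" using assms by simp
  ultimately have "real a ^ a * real d ^ d * (real c ^ c * real (a+c-d) ^ (a+c-d))
      < real (a+d) ^ (a+d) * (real (a+c) ^ (a+c) * real (c-d) ^ (c-d))"
    by (simp add: mult_strict_mono)
  then show ?thesis
    using assms by (simp add: divide_less_eq mult.assoc)
qed

theorem mainTheorem8:
  shows "(\<forall>a b c d :: nat. 0 < a \<longrightarrow> 0 < d \<longrightarrow> d < b \<longrightarrow> b \<le> c \<longrightarrow> even (b + c) \<longrightarrow>
            K3 a b c d \<le> 1 \<and> (b \<noteq> c \<longrightarrow> K3 a b c d < 1))
       \<and> (\<forall>a d c :: nat. 0 < a \<longrightarrow> 0 < d \<longrightarrow> d < c \<longrightarrow>
            (real a ^ a * real d ^ d * real c ^ c * real (a+c-d) ^ (a+c-d))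
            / (real (a+d) ^ (a+d) * real (a+c) ^ (a+c) * real (c-d) ^ (c-d)) < 1)"
  using K3_le_1 self_power_ratio_less_1 by blast

end
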